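(* Assume the subgraph $\mathcal G_{\sigma(t)}$ is undirected for all $t\ge0$, and that there exist $T_{\mathrm c}>0$ and a subsequence $\{t_{j_k}:k=0,1,2,\dots\}$ of the switching instants with $t_{j_0}=0$ and $t_{j_{k+1}}-t_{j_k}\le T_{\mathrm c}$, such that for every $k$ every node $i\in\{1,\dots,N\}$ is reachable from node $0$ in the union graph $\bigcup_{t_j\in[t_{j_k},t_{j_{k+1}})}\bar{\mathcal G}_{\sigma(t_j)}$. Then there exists $0<\delta<1$ such that $$\left\|\prod_{r=j_k}^{j_{k+1}-1}P_{\sigma(t_r)}\right\|\le\delta\quad\text{for all }k=0,1,2,\dots.$$
   Context: $\sigma:[0,\infty)\to\mathcal P=\{1,\dots,n_0\}$ is a piecewise constant switching signal: there are switching instants $0=t_0<t_1<\cdots$ and a dwell time $\tau>0$ with $t_{j+1}-t_j\ge\tau$, and $\sigma$ is constant on each $[t_j,t_{j+1})$. For each $p\in\mathcal P$, $\bar{\mathcal G}_p$ is a graph on nodes $\{0,1,\dots,N\}$ with edge set $\bar{\mathcal E}_p$ of ordered pairs $(j,i)$, $j\ne i$; $a_{ij}(t)=1$ if $(j,i)\in\bar{\mathcal E}_{\sigma(t)}$, else $0$. $\mathcal G_{\sigma(t)}$ is the subgraph on $\{1,\dots,N\}$ with the edges of $\bar{\mathcal E}_{\sigma(t)}$ among those nodes (undirected: $(i,j)$ edge iff $(j,i)$ edge), with Laplacian $\mathcal L_{\sigma(t)}$ ($l_{ii}=\sum_{j=1}^Na_{ij}(t)$, $l_{ij}=-a_{ij}(t)$,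 $i\ne j$). $\Delta_{\sigma(t)}=\mathrm{diag}(a_{10}(t),\dots,a_{N0}(t))$, $\mathcal H_{\sigma(t)}=\mathcal L_{\sigma(t)}+\Delta_{\sigma(t)}$, and $P_{\sigma(t)}\in\mathbb{R}^{N\times N}$ is the orthogonal projection onto $\ker\mathcal H_{\sigma(t)}$ (zero matrix if the kernel is trivial). Node $i$ is reachable from $0$ if the graph has edges $(0,i_2),(i_2,i_3),\dots,(i_s,i)$; the union graph has the union of edge sets. $\prod_{r=m}^n\Xi_r=\Xi_n\cdots\Xi_{m+1}\Xi_m$. $\|\cdot\|$ is the matrix norm induced by the Euclidean norm. *)

theory Defs
  imports "HOL-Analysis.Analysis"
begin

text \<open>Nodes: the leader (node 0) is None, followers 1..N are Some i, i :: 'n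
  (a finite type with CARD('n) = N).  An edge set is a set of ordered pairs (j,i).\<close>

definition adj :: "('n option \<times> 'n option) set \<Rightarrow> 'n option \<Rightarrow> 'n option \<Rightarrow> real" where
  "adj E i j = (if (j, i) \<in> E then 1 else 0)"

definition lapl :: "('n::finite option \<times> 'n option) set \<Rightarrow> real^'n^'n" where
  "lapl E = (\<chi> i j. if i = j then (\<Sum>l\<in>UNIV. adj E (Some i) (Some l)) else - adj E (Some i) (Some j))"

definition leader_diag :: "('n::finite option \<times> 'n option) set \<Rightarrow> real^'n^'n" where
  "leader_diag E = (\<chi> i j. if i = j then adj E (Some i) None else 0)"

definition Hmat :: "('n::finite option \<times> 'n option) set \<Rightarrow> real^'n^'n" where
  "Hmat E = lapl E + leader_diag E"

definition ker_proj :: "real^'n^'n \<Rightarrow> real^'n^'n" where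
  "ker_proj A = matrix (closest_point {v. A *v v = 0})"

fun mprod :: "(nat \<Rightarrow> real^'n^'n) \<Rightarrow> nat \<Rightarrow> nat \<Rightarrow> real^'n^'n" where
  "mprod F m 0 = mat 1"
| "mprod F m (Suc d) = F (m + d) ** mprod F m d"

end

theory Submission
  imports Defs
begin

text \<open>Each factor of a window product is an orthogonal projection: it does not increase
  the norm, and it preserves the norm of x only if it fixes x. So if the product preserves the
  norm of x, then x lies in the kernel of every H over the window. Since x' H x = 1/2 sum a_ij
  (x_i - x_j)^2 + sum b_i x_i^2 for an undirected follower graph, a kernel vector is constant
  along follower edges and vanishes at the neighbours of the leader; reachability from the
  leader in the union graph then forces x = 0. Hence each window product is a strict
  contraction, and its operator norm is below 1 by compactness of the unit sphere. The dwell
  time bounds the number of switches in a window by Tc / tau, so only finitely many window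
  products occur, and the largest of their norms is the required delta.\<close>

lemma closest_point_subspace_orthogonal:
  fixes S :: "'a::euclidean_space set"
  assumes S: "subspace S" and y: "y \<in> S"
  shows "inner (a - closest_point S a) y = 0"
proof -
  let ?p = "closest_point S a"
  have cl: "closed S" and cv: "convex S" and ne: "S \<noteq> {}"
    using S y closed_subspace subspace_imp_convex by auto
  have p: "?p \<in> S" using closest_point_in_set[OF cl ne] .
  have "inner (a - ?p) y \<le> 0"
    using closest_point_dot[OF cv cl, of "?p + y" a] S p y by (simp add: subspace_add)
  moreover have "inner (a - ?p) y \<ge> 0"
    using closest_point_dot[OF cv cl, of "?p - y" a] S p y
    by (simp add: subspace_diff inner_minus_right)
  ultimately show ?thesis by simp
qed

lemma closest_point_subspace_eqI:
  fixes S :: "'a::euclidean_space set"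
  assumes S: "subspace S" and p: "p \<in> S" and orth: "\<And>y. y \<in> S \<Longrightarrow> inner (a - p) y = 0"
  shows "closest_point S a = p"
proof -
  have "dist a p \<le> dist a z" if z: "z \<in> S" for z
  proof -
    have "orthogonal (a - p) (p - z)"
      using orth S p z by (simp add: orthogonal_def subspace_diff)
    then have "(dist a z)\<^sup>2 = (dist a p)\<^sup>2 + (norm (p - z))\<^sup>2"
      using norm_add_Pythagorean[of "a - p" "p - z"] by (simp add: dist_norm)
    then have "(dist a p)\<^sup>2 \<le> (dist a z)\<^sup>2" by simp
    then show ?thesis by (rule power2_le_imp_le) simp
  qed
  then show ?thesis
    using closest_point_unique[OF subspace_imp_convex[OF S] closed_subspace[OF S] p] by simp
qed

lemma closest_point_subspace_in:
  fixes S :: "'a::euclidean_space set"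
  assumes "subspace S"
  shows "closest_point S a \<in> S"
  using closest_point_in_set[OF closed_subspace[OF assms]] assms subspace_0 by blast

lemma linear_closest_point_subspace:
  fixes S :: "'a::euclidean_space set"
  assumes S: "subspace S"
  shows "linear (closest_point S)"
proof (rule linearI)
  fix x y
  show "closest_point S (x + y) = closest_point S x + closest_point S y"
    using closest_point_subspace_orthogonal[OF S, of _ x] closest_point_subspace_orthogonal[OF S, of _ y]
    by (intro closest_point_subspace_eqI[OF S])
       (auto simp: subspace_add[OF S] closest_point_subspace_in[OF S]
          algebra_simps inner_diff_left inner_add_left)
next
  fix c :: real and x
  show "closest_point S (c *\<^sub>R x) = c *\<^sub>R closest_point S x"
    using closest_point_subspace_orthogonal[OF S, of _ x]
    by (intro closest_point_subspace_eqI[OF S])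
       (auto simp: subspace_scale[OF S] closest_point_subspace_in[OF S]
          simp flip: scaleR_right_diff_distrib)
qed

lemma norm_closest_point_subspace_Pythagorean:
  fixes S :: "'a::euclidean_space set"
  assumes S: "subspace S"
  shows "(norm a)\<^sup>2 = (norm (closest_point S a))\<^sup>2 + (norm (a - closest_point S a))\<^sup>2"
  using norm_add_Pythagorean[of "closest_point S a" "a - closest_point S a"]
    closest_point_subspace_orthogonal[OF S closest_point_subspace_in[OF S]]
  by (simp add: orthogonal_def inner_commute)

lemma norm_closest_point_subspace_le:
  fixes S :: "'a::euclidean_space set"
  assumes "subspace S"
  shows "norm (closest_point S a) \<le> norm a"
  using norm_closest_point_subspace_Pythagorean[OF assms, of a]
  by (metis abs_norm_cancel le_add_same_cancel1 power2_le_iff_abs_le zero_le_power2 norm_ge_zero)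

lemma norm_closest_point_subspace_eq_imp_in:
  fixes S :: "'a::euclidean_space set"
  assumes S: "subspace S" and "norm (closest_point S a) = norm a"
  shows "a \<in> S"
proof -
  have "a - closest_point S a = 0"
    using norm_closest_point_subspace_Pythagorean[OF S, of a] assms(2) by simp
  then show ?thesis using closest_point_subspace_in[OF S] by (metis eq_iff_diff_eq_0)
qed

lemma onorm_lt_1:
  fixes f :: "'a::euclidean_space \<Rightarrow> 'b::real_normed_vector"
  assumes f: "linear f" and contr: "\<And>x. x \<noteq> 0 \<Longrightarrow> norm (f x) < norm x"
  shows "onorm f < 1"
proof -
  have "continuous_on (sphere 0 1) (\<lambda>x. norm (f x))"
    using f by (intro continuous_intros linear_continuous_on) (simp add: linear_conv_bounded_linear)
  moreover have "sphere (0::'a) 1 \<noteq> {}" by simp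
  ultimately obtain u where u: "u \<in> sphere 0 1"
    and max: "\<And>y. y \<in> sphere 0 1 \<Longrightarrow> norm (f y) \<le> norm (f u)"
    using continuous_attains_sup[OF compact_sphere] by blast
  have "norm (f x) \<le> norm (f u) * norm x" for x
  proof (cases "x = 0")
    case True
    then show ?thesis using linear_0[OF f] by simp
  next
    case False
    have "norm (f x) = norm x * norm (f (x /\<^sub>R norm x))"
      using False by (simp add: linear_cmul[OF f])
    also have "\<dots> \<le> norm x * norm (f u)"
      using max[of "x /\<^sub>R norm x"] False by (simp add: mult_left_mono)
    finally show ?thesis by (simp add: mult.commute)
  qed
  then have "onorm f \<le> norm (f u)" by (rule onorm_le)
  also have "\<dots> < 1"
    using contr[of u] u by fastforce
  finally show ?thesis .
qed

lemma subspace_matrix_kernel: "subspace {v. (A::real^'n^'m) *v v = 0}"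
  by (rule linear_subspace_kernel[OF matrix_vector_mul_linear])

lemma ker_proj_apply: "ker_proj A *v x = closest_point {v. A *v v = 0} x"
  using matrix_vector_mul(2)[OF linear_closest_point_subspace[OF subspace_matrix_kernel]]
  unfolding ker_proj_def by metis

lemma norm_ker_proj_le: "norm (ker_proj A *v x) \<le> norm x"
  unfolding ker_proj_apply by (rule norm_closest_point_subspace_le[OF subspace_matrix_kernel])

lemma ker_proj_fixed_iff: "ker_proj A *v x = x \<longleftrightarrow> A *v x = 0"
proof -
  have "closed {v. A *v v = 0}" by (rule closed_subspace[OF subspace_matrix_kernel])
  moreover have "{v. A *v v = 0} \<noteq> {}" by (auto intro!: exI[of _ 0])
  ultimately show ?thesis unfolding ker_proj_apply by (simp add: closest_point_refl)
qed

lemma norm_ker_proj_eq_imp_fixed: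
  assumes "norm (ker_proj A *v x) = norm x"
  shows "ker_proj A *v x = x"
  using norm_closest_point_subspace_eq_imp_in[OF subspace_matrix_kernel] assms
  unfolding ker_proj_apply by (metis closest_point_self)

lemma mprod_fixed:
  assumes "\<And>r. r < d \<Longrightarrow> F (m + r) *v x = x"
  shows "mprod F m d *v x = x"
  using assms by (induction d) (simp_all flip: matrix_vector_mul_assoc)

lemma norm_mprod_le:
  assumes "\<And>r x. norm (F r *v x) \<le> norm x"
  shows "norm (mprod F m d *v x) \<le> norm x"
proof (induction d)
  case (Suc d)
  then show ?case
    using assms[of "m + d" "mprod F m d *v x"] by (simp flip: matrix_vector_mul_assoc)
qed simp

lemma norm_mprod_eq_imp_fixed:
  assumes le: "\<And>r x. norm (F r *v x) \<le> norm x"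
    and eq: "\<And>r x. norm (F r *v x) = norm x \<Longrightarrow> F r *v x = x"
    and "norm (mprod F m d *v x) = norm x" and "r < d"
  shows "F (m + r) *v x = x"
  using assms(3,4)
proof (induction d arbitrary: r)
  case (Suc d)
  let ?y = "mprod F m d *v x"
  have step: "mprod F m (Suc d) *v x = F (m + d) *v ?y"
    by (simp flip: matrix_vector_mul_assoc)
  have "norm (F (m + d) *v ?y) \<le> norm ?y" "norm ?y \<le> norm x"
    using le norm_mprod_le by blast+
  moreover have "norm (F (m + d) *v ?y) = norm x" using Suc.prems(1) step by simp
  ultimately have "norm ?y = norm x" by linarith
  then have fixed: "F (m + r') *v x = x" if "r' < d" for r'
    using Suc.IH that by blast
  then have "?y = x" by (rule mprod_fixed)
  then have "F (m + d) *v x = x" using eq Suc.prems(1) step by metis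
  then show ?case using fixed Suc.prems(2) less_Suc_eq by auto
qed simp

lemma mprod_cong:
  assumes "\<And>r. r < d \<Longrightarrow> F (m + r) = F' (m' + r)"
  shows "mprod F m d = mprod F' m' d"
  using assms by (induction d) simp_all

lemma finite_range_mprod:
  assumes "finite P" and "\<And>r. s r \<in> P" and "\<And>k. d k \<le> D"
  shows "finite (range (\<lambda>k. mprod (\<lambda>r. G (s r)) (m k) (d k)))"
proof -
  let ?prod = "\<lambda>l. mprod (\<lambda>r. G (l ! r)) 0 (length l)"
  let ?L = "{l. set l \<subseteq> P \<and> length l \<le> D}"
  have "mprod (\<lambda>r. G (s r)) (m k) (d k) \<in> ?prod ` ?L" for k
  proof
    let ?l = "map (\<lambda>r. s (m k + r)) [0..<d k]"
    show "mprod (\<lambda>r. G (s r)) (m k) (d k) = ?prod ?l"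
      unfolding length_map length_upt diff_zero by (rule mprod_cong) simp
    show "?l \<in> ?L" using assms(2,3) by auto
  qed
  then have "range (\<lambda>k. mprod (\<lambda>r. G (s r)) (m k) (d k)) \<subseteq> ?prod ` ?L" by blast
  moreover have "finite ?L" using assms(1) by (rule finite_lists_length_le)
  ultimately show ?thesis by (meson finite_imageI finite_subset)
qed

lemma finite_range_lt_imp_uniform_bound:
  fixes f :: "'a \<Rightarrow> real"
  assumes "finite (range f)" and "\<And>k. f k < 1"
  shows "\<exists>\<delta>>0. \<delta> < 1 \<and> (\<forall>k. f k \<le> \<delta>)"
proof (intro exI conjI allI)
  have "Max (range f) \<in> range f" using assms(1) by (intro Max_in) auto
  then show "max (1/2) (Max (range f)) < 1" using assms(2) by auto
  show "f k \<le> max (1/2) (Max (range f))" for k using assms(1) by (simp add: le_max_iff_disj)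
qed simp

lemma switching_times_ge:
  assumes "\<And>j. t (Suc j) - t j \<ge> (\<tau>::real)"
  shows "t m + real d * \<tau> \<le> t (m + d)"
proof (induction d)
  case (Suc d)
  then show ?case using assms[of "m + d"] by (simp add: algebra_simps)
qed simp

lemma switch_count_le:
  assumes dwell: "\<And>j. t (Suc j) - t j \<ge> (\<tau>::real)" and "\<tau> > 0"
    and "m \<le> n" and "t n - t m \<le> Tc"
  shows "n - m \<le> nat \<lceil>Tc / \<tau>\<rceil>"
proof -
  have "t m + real (n - m) * \<tau> \<le> t n"
    using switching_times_ge[where t = t and \<tau> = \<tau> and m = m and d = "n - m", OF dwell] assms(3)
    by simp
  then have "real (n - m) \<le> Tc / \<tau>"
    using assms(2,4) by (simp add: pos_le_divide_eq)
  then show ?thesis by linarith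
qed

lemma Hmat_apply:
  fixes E :: "('n::finite option \<times> 'n option) set"
  assumes loopfree: "\<And>i. (Some i, Some i) \<notin> E"
  shows "(Hmat E *v x) $ i =
    (\<Sum>j\<in>UNIV. adj E (Some i) (Some j) * (x$i - x$j)) + adj E (Some i) None * x$i"
proof -
  let ?a = "\<lambda>i j. adj E (Some i) (Some j)"
  have H: "(Hmat E) $ i $ j =
      (if i = j then (\<Sum>l\<in>UNIV. ?a i l) + adj E (Some i) None else 0) - ?a i j" for j
    using loopfree[of i] by (auto simp: Hmat_def lapl_def leader_diag_def adj_def)
  have "(Hmat E *v x) $ i = (\<Sum>j\<in>UNIV. (Hmat E) $ i $ j * x $ j)"
    by (simp add: matrix_vector_mult_def)
  also have "\<dots> = (\<Sum>j\<in>UNIV.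
      (if i = j then ((\<Sum>l\<in>UNIV. ?a i l) + adj E (Some i) None) * x$j else 0) - ?a i j * x$j)"
    unfolding H by (intro sum.cong) (auto simp: algebra_simps)
  also have "\<dots> = (\<Sum>j\<in>UNIV. ?a i j * (x$i - x$j)) + adj E (Some i) None * x$i"
    by (simp add: algebra_simps sum_subtractf sum_distrib_left sum_distrib_right)
  finally show ?thesis .
qed

lemma inner_Hmat:
  fixes E :: "('n::finite option \<times> 'n option) set"
  assumes loopfree: "\<And>i. (Some i, Some i) \<notin> E"
    and undirected: "\<And>i j. (Some j, Some i) \<in> E \<longleftrightarrow> (Some i, Some j) \<in> E"
  shows "x \<bullet> (Hmat E *v x) =
    (\<Sum>i\<in>UNIV. \<Sum>j\<in>UNIV. adj E (Some i) (Some j) * (x$i - x$j)\<^sup>2) / 2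
    + (\<Sum>i\<in>UNIV. adj E (Some i) None * (x$i)\<^sup>2)"
proof -
  let ?a = "\<lambda>i j. adj E (Some i) (Some j)"
  define S where "S = (\<Sum>i\<in>UNIV. \<Sum>j\<in>UNIV. ?a i j * (x$i - x$j) * x$i)"
  have "x \<bullet> (Hmat E *v x) = S + (\<Sum>i\<in>UNIV. adj E (Some i) None * (x$i)\<^sup>2)"
    unfolding inner_vec_def Hmat_apply[OF loopfree] S_def
    by (simp add: algebra_simps sum.distrib sum_distrib_left power2_eq_square)
  moreover have "S = (\<Sum>i\<in>UNIV. \<Sum>j\<in>UNIV. ?a i j * (x$j - x$i) * x$j)"
    unfolding S_def using undirected by (subst sum.swap) (simp add: adj_def)
  then have "2 * S = (\<Sum>i\<in>UNIV. \<Sum>j\<in>UNIV. ?a i j * (x$i - x$j)\<^sup>2)"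
    unfolding mult_2
    by (subst (1) S_def) (simp add: sum.distrib[symmetric] algebra_simps power2_eq_square)
  ultimately show ?thesis by simp
qed

lemma Hmat_kernel_edges:
  fixes E :: "('n::finite option \<times> 'n option) set"
  assumes loopfree: "\<And>i. (Some i, Some i) \<notin> E"
    and undirected: "\<And>i j. (Some j, Some i) \<in> E \<longleftrightarrow> (Some i, Some j) \<in> E"
    and ker: "Hmat E *v x = 0"
  shows "\<And>i j. (Some j, Some i) \<in> E \<Longrightarrow> x$i = x$j"
    and "\<And>i. (None, Some i) \<in> E \<Longrightarrow> x$i = 0"
proof -
  let ?A = "\<Sum>i\<in>UNIV. \<Sum>j\<in>UNIV. adj E (Some i) (Some j) * (x$i - x$j)\<^sup>2"
  let ?B = "\<Sum>i\<in>UNIV. adj E (Some i) None * (x$i)\<^sup>2"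
  have "?A \<ge> 0" "?B \<ge> 0" by (intro sum_nonneg; simp add: adj_def)+
  moreover have "?A / 2 + ?B = 0" using inner_Hmat[OF loopfree undirected, of x] ker by simp
  ultimately have A: "?A = 0" and B: "?B = 0" by linarith+
  show "x$i = x$j" if "(Some j, Some i) \<in> E" for i j
    using A that by (force simp: sum_nonneg_eq_0_iff sum_nonneg adj_def)
  show "x$i = 0" if "(None, Some i) \<in> E" for i
    using B that by (force simp: sum_nonneg_eq_0_iff adj_def)
qed

lemma reachable_from_leader_eq_0:
  fixes x :: "real^'n"
  assumes edge: "\<And>i j. (Some j, Some i) \<in> E \<Longrightarrow> x$i = x$j"
    and leader_edge: "\<And>i. (None, Some i) \<in> E \<Longrightarrow> x$i = 0"
    and "(None, Some i) \<in> E\<^sup>+"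
  shows "x$i = 0"
proof -
  have "case_option 0 (\<lambda>i. x$i) v = 0" if "(None, v) \<in> E\<^sup>+" for v
    using that
  proof (induction rule: trancl_induct)
    case (base v)
    then show ?case using leader_edge by (cases v) auto
  next
    case (step u v)
    then show ?case using edge leader_edge by (cases u; cases v) auto
  qed
  from this[OF assms(3)] show ?thesis by simp
qed

lemma onorm_window_product_lt_1:
  fixes E :: "nat \<Rightarrow> ('n::finite option \<times> 'n option) set"
  assumes loopfree: "\<And>r i. r \<in> {m..<n} \<Longrightarrow> (Some i, Some i) \<notin> E r"
    and undirected: "\<And>r i j. r \<in> {m..<n} \<Longrightarrow>
      (Some j, Some i) \<in> E r \<longleftrightarrow> (Some i, Some j) \<in> E r"
    and reach: "\<And>i. (None, Some i) \<in> (\<Union>r\<in>{m..<n}. E r)\<^sup>+"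
  shows "onorm (\<lambda>x. mprod (\<lambda>r. ker_proj (Hmat (E r))) m (n - m) *v x) < 1"
proof (rule onorm_lt_1)
  let ?F = "\<lambda>r. ker_proj (Hmat (E r))"
  fix x :: "real^'n"
  assume "x \<noteq> 0"
  have "norm (mprod ?F m (n - m) *v x) \<le> norm x"
    by (rule norm_mprod_le) (rule norm_ker_proj_le)
  moreover have "x = 0" if eq: "norm (mprod ?F m (n - m) *v x) = norm x"
  proof -
    have ker: "Hmat (E r) *v x = 0" if r: "r \<in> {m..<n}" for r
    proof -
      have "r - m < n - m" and "m + (r - m) = r" using r by auto
      then show ?thesis
        using norm_mprod_eq_imp_fixed[of ?F, OF norm_ker_proj_le norm_ker_proj_eq_imp_fixed eq]
        by (metis ker_proj_fixed_iff)
    qed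
    have "x$i = 0" for i
    proof (rule reachable_from_leader_eq_0[OF _ _ reach])
      show "x$i = x$j" if "(Some j, Some i) \<in> (\<Union>r\<in>{m..<n}. E r)" for i j
        using that Hmat_kernel_edges(1)[OF loopfree undirected ker] by blast
      show "x$i = 0" if "(None, Some i) \<in> (\<Union>r\<in>{m..<n}. E r)" for i
        using that Hmat_kernel_edges(2)[OF loopfree undirected ker] by blast
    qed
    then show ?thesis by (simp add: vec_eq_iff)
  qed
  ultimately show "norm (mprod ?F m (n - m) *v x) < norm x"
    using \<open>x \<noteq> 0\<close> by fastforce
qed simp

theorem lemma1:
  fixes n0 :: nat and \<sigma> :: "real \<Rightarrow> nat" and t :: "nat \<Rightarrow> real" and \<tau> :: real
    and Eb :: "nat \<Rightarrow> ('n::finite option \<times> 'n option) set"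
    and Tc :: real and js :: "nat \<Rightarrow> nat"
  assumes sig_range: "\<And>s. s \<ge> 0 \<Longrightarrow> \<sigma> s \<in> {1..n0}"
    and t0: "t 0 = 0"
    and tau: "\<tau> > 0"
    and dwell: "\<And>j. t (Suc j) - t j \<ge> \<tau>"
    and pw_const: "\<And>j s. t j \<le> s \<Longrightarrow> s < t (Suc j) \<Longrightarrow> \<sigma> s = \<sigma> (t j)"
    and no_loops: "\<And>p x. (x, x) \<notin> Eb p"
    and undirected: "\<And>s i j. s \<ge> 0 \<Longrightarrow>
        ((Some j, Some i) \<in> Eb (\<sigma> s) \<longleftrightarrow> (Some i, Some j) \<in> Eb (\<sigma> s))"
    and Tc_pos: "Tc > 0"
    and js_mono: "strict_mono js"
    and js0: "js 0 = 0"
    and js_gap: "\<And>k. t (js (Suc k)) - t (js k) \<le> Tc"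
    and reach: "\<And>k i. (None, Some i) \<in> (\<Union>r\<in>{js k..<js (Suc k)}. Eb (\<sigma> (t r)))\<^sup>+"
  shows "\<exists>\<delta>. 0 < \<delta> \<and> \<delta> < 1 \<and>
    (\<forall>k. onorm (\<lambda>x. mprod (\<lambda>r. ker_proj (Hmat (Eb (\<sigma> (t r))))) (js k) (js (Suc k) - js k) *v x) \<le> \<delta>)"
proof -
  have t_nonneg: "0 \<le> t r" for r
    using switching_times_ge[where t = t and \<tau> = \<tau> and m = 0 and d = r, OF dwell] t0 tau
    by (metis add_0 order_trans mult_nonneg_nonneg of_nat_0_le_iff less_imp_le)
  define Q
    where "Q k = mprod (\<lambda>r. ker_proj (Hmat (Eb (\<sigma> (t r))))) (js k) (js (Suc k) - js k)" for k
  have "onorm (\<lambda>x. Q k *v x) < 1" for k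
    unfolding Q_def
    by (rule onorm_window_product_lt_1) (use no_loops undirected[OF t_nonneg] reach in auto)
  moreover have "finite (range Q)"
    unfolding Q_def
  proof (rule finite_range_mprod[where G = "\<lambda>p. ker_proj (Hmat (Eb p))" and s = "\<lambda>r. \<sigma> (t r)"
        and P = "{1..n0}" and D = "nat \<lceil>Tc / \<tau>\<rceil>"])
    show "js (Suc k) - js k \<le> nat \<lceil>Tc / \<tau>\<rceil>" for k
      using switch_count_le[OF dwell tau _ js_gap] js_mono by (simp add: strict_mono_less_eq)
  qed (use sig_range t_nonneg in auto)
  then have "finite (range (\<lambda>k. onorm (\<lambda>x. Q k *v x)))"
    by (metis finite_imageI image_image)
  ultimately show ?thesis
    unfolding Q_def using finite_range_lt_imp_uniform_bound by blast
qed

end
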